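(* Let $M\in\mathbb{R}^{m\times n}$ with $\operatorname{rank}(M)=r$, and let $\{p_i\}_{i=1}^n$ be a probability distribution on $[n]$ with $p_i>0$ for all $i$, $p_{\min}=\min_{i\in[n]}p_i$. For $j=1,\dots,d$ independently sample $i_j\in[n]$ with $\Pr[i_j=i]=p_i$, and let $A\in\mathbb{R}^{m\times d}$ have columns $A^{(j)}=M^{(i_j)}/\sqrt{d\,p_{i_j}}$. Let $t>0$. If $d\ge 7\mu(r)r(t+\ln r)/(n\,p_{\min})$, then with probability at least $1-e^{-t}$, $\operatorname{rank}(A)=r$.
   Context: For a matrix $B$, $B_{(i)}$ denotes its $i$-th row and $B^{(j)}$ its $j$-th column. With $\bar U\in\mathbb{R}^{m\times r}$, $\bar V\in\mathbb{R}^{n\times r}$ the top-$r$ left and right singular vectors of $M$, the incoherence is $\mu(r)=\max\left(\max_{i\in[m]}\frac{m}{r}\|\bar U_{(i)}\|_2^2,\ \max_{i\in[n]}\frac{n}{r}\|\bar V_{(i)}\|_2^2\right)$. *)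

theory Defs
  imports "HOL-Analysis.Analysis" "HOL-Probability.Probability"
begin

text \<open>The columns of U (resp. V)
  are then the top-r left (resp. right) singular vectors of M.\<close>
definition diag_vec :: "real^'r \<Rightarrow> real^'r^'r" where
  "diag_vec s = (\<chi> i j. if i = j then s $ i else 0)"

definition is_thin_svd :: "real^'n^'m \<Rightarrow> real^'r^'m \<Rightarrow> real^'r \<Rightarrow> real^'r^'n \<Rightarrow> bool" where
  "is_thin_svd M U s V \<longleftrightarrow>
     transpose U ** U = mat 1 \<and> transpose V ** V = mat 1 \<and>
     (\<forall>k. s $ k > 0) \<and> M = U ** diag_vec s ** transpose V"

definition incoherence :: "real^'r^'m \<Rightarrow> real^'r^'n \<Rightarrow> real" where
  "incoherence U V = max
     (Max ((\<lambda>i. real CARD('m) / real CARD('r) * (norm (U $ i))\<^sup>2) ` UNIV))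
     (Max ((\<lambda>i. real CARD('n) / real CARD('r) * (norm (V $ i))\<^sup>2) ` UNIV))"

definition sampled_matrix :: "real^'n^'m \<Rightarrow> 'n pmf \<Rightarrow> ('d \<Rightarrow> 'n) \<Rightarrow> real^'d^'m" where
  "sampled_matrix M p f = (\<chi> k j. M $ k $ (f j) / sqrt (real CARD('d) * pmf p (f j)))"

end

theory Submission
  imports Defs
begin

text \<open>
  Since \<open>U diag(s)\<close> has independent columns, \<open>rank A = r\<close> exactly when the sampled rows of \<open>V\<close>
  span \<open>\<real>\<^sup>r\<close>. If the rows drawn so far span a subspace \<open>W\<close> of codimension \<open>c\<close>, the rows of \<open>V\<close>
  outside \<open>W\<close> carry squared norm at least \<open>c\<close> (all rows together carry \<open>r\<close>, those inside \<open>W\<close> at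
  most \<open>dim W\<close>), while each row carries at most \<open>\<mu> r / n\<close>. So the next sample leaves \<open>W\<close> with
  probability at least \<open>q c\<close>, where \<open>q = p_min n / (\<mu> r)\<close>, and the expected codimension shrinks by
  the factor \<open>1 - q\<close> per sample. Hence the sampled rows fail to span with probability at most
  \<open>r (1 - q)^d \<le> r exp (-q d) \<le> exp (-t)\<close>.
\<close>

lemma measure_bind_pmf_finite:
  fixes p :: "'a::finite pmf"
  shows "measure_pmf.prob (bind_pmf p N) X = (\<Sum>y\<in>UNIV. pmf p y * measure_pmf.prob (N y) X)"
proof -
  have "emeasure (measure_pmf (bind_pmf p N)) X = (\<integral>\<^sup>+y. emeasure (N y) X \<partial>p)"
    by (rule emeasure_bind_pmf)
  also have "\<dots> = (\<integral>\<^sup>+y. ennreal (pmf p y) * emeasure (N y) X \<partial>count_space UNIV)"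
    by (rule nn_integral_measure_pmf)
  also have "\<dots> = (\<Sum>y\<in>UNIV. ennreal (pmf p y * measure_pmf.prob (N y) X))"
    by (simp add: nn_integral_count_space_finite measure_pmf.emeasure_eq_measure ennreal_mult)
  also have "\<dots> = ennreal (\<Sum>y\<in>UNIV. pmf p y * measure_pmf.prob (N y) X)"
    by (rule sum_ennreal) simp
  finally show ?thesis
    by (simp add: measure_pmf.emeasure_eq_measure sum_nonneg)
qed

lemma prob_Pi_pmf_not_spanning_le:
  fixes v :: "'n::finite \<Rightarrow> 'a::euclidean_space" and p :: "'n pmf"
  assumes escape: "\<And>W. q * (real DIM('a) - real (dim W)) \<le> measure_pmf.prob p {y. v y \<notin> span W}"
    and "q \<le> 1" and "finite D"
  shows "measure_pmf.prob (Pi_pmf D dflt (\<lambda>_. p)) {f. span (W \<union> v ` f ` D) \<noteq> UNIV}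
           \<le> (real DIM('a) - real (dim W)) * (1 - q) ^ card D"
  using \<open>finite D\<close>
proof (induction D arbitrary: W rule: finite_induct)
  case empty
  have "dim W \<le> DIM('a)"
    by (metis dim_subset_UNIV dim_UNIV subset_UNIV)
  moreover have "dim W < DIM('a)" if "span W \<noteq> UNIV"
    using that dim_eq_full[of W] \<open>dim W \<le> DIM('a)\<close> by linarith
  ultimately show ?case
    using measure_pmf.prob_le_1 by (cases "span W = UNIV") (auto intro: order_trans)
next
  case (insert x D)
  define c where "c = (1 - q) ^ card D"
  have "0 \<le> c"
    unfolding c_def using \<open>q \<le> 1\<close> by simp
  define E where "E = {f. span (W \<union> v ` f ` insert x D) \<noteq> UNIV}"
  have E_upd: "(\<lambda>f. f(x := y)) -` E = {f. span (insert (v y) W \<union> v ` f ` D) \<noteq> UNIV}" for y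
  proof -
    have "(f(x := y)) ` D = f ` D" for f :: "'b \<Rightarrow> 'n"
      using insert.hyps(2) by (intro image_cong) auto
    then show ?thesis
      unfolding E_def by auto
  qed
  have "measure_pmf.prob (Pi_pmf (insert x D) dflt (\<lambda>_. p)) E
      = (\<Sum>y\<in>UNIV. pmf p y * measure_pmf.prob (Pi_pmf D dflt (\<lambda>_. p))
                                  {f. span (insert (v y) W \<union> v ` f ` D) \<noteq> UNIV})"
    by (simp add: Pi_pmf_insert'[OF insert.hyps] measure_bind_pmf_finite map_pmf_def[symmetric] E_upd)
  also have "\<dots> \<le> (\<Sum>y\<in>UNIV. pmf p y * ((real DIM('a) - real (dim (insert (v y) W))) * c))"
    unfolding c_def by (intro sum_mono mult_left_mono insert.IH) auto
  also have "\<dots> = (\<Sum>y\<in>UNIV. pmf p y * ((real DIM('a) - real (dim W)) * c))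
                  - (\<Sum>y\<in>UNIV. pmf p y * (if v y \<in> span W then 0 else c))"
    by (simp add: dim_insert sum_subtractf[symmetric] algebra_simps)
      (intro sum.cong refl; simp add: algebra_simps)
  also have "\<dots> = (real DIM('a) - real (dim W)) * c - c * measure_pmf.prob p {y. v y \<notin> span W}"
    by (simp add: sum_distrib_right[symmetric] sum_pmf_eq_1 measure_measure_pmf_finite
        sum_distrib_left if_distrib sum.If_cases mult.commute Compl_eq)
  also have "\<dots> \<le> (real DIM('a) - real (dim W)) * c - c * (q * (real DIM('a) - real (dim W)))"
    using escape[of W] \<open>0 \<le> c\<close> by (intro diff_left_mono mult_left_mono)
  also have "\<dots> = (real DIM('a) - real (dim W)) * (1 - q) ^ card (insert x D)"
    using insert.hyps by (simp add: c_def algebra_simps)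
  finally show ?case
    unfolding E_def .
qed

lemma norm_power2_eq_sum_inner_orthonormal:
  assumes "pairwise orthogonal B" "\<And>b. b \<in> B \<Longrightarrow> norm b = 1" "x \<in> span B" "finite B"
  shows "(norm x)\<^sup>2 = (\<Sum>b\<in>B. (x \<bullet> b)\<^sup>2)"
proof -
  have "x \<bullet> x = x \<bullet> (\<Sum>b\<in>B. (x \<bullet> b) *\<^sub>R b)"
    using orthonormal_basis_expand[OF assms] by simp
  then show ?thesis
    unfolding power2_norm_eq_inner by (simp add: inner_sum_right power2_eq_square)
qed

lemma sum_inner_rows_power2:
  fixes V :: "real^'r::finite^'n::finite"
  assumes "transpose V ** V = mat 1"
  shows "(\<Sum>i\<in>UNIV. (V $ i \<bullet> w)\<^sup>2) = (norm w)\<^sup>2"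
proof -
  have "(\<Sum>i\<in>UNIV. (V $ i \<bullet> w)\<^sup>2) = (V *v w) \<bullet> (V *v w)"
    by (simp add: matrix_mult_dot inner_vec_def power2_eq_square)
  also have "\<dots> = ((V *v w) v* V) \<bullet> w"
    by (simp add: dot_lmul_matrix)
  also have "(V *v w) v* V = w"
    by (metis assms matrix_vector_mul_assoc matrix_vector_mul_lid transpose_matrix_vector)
  finally show ?thesis
    by (simp add: power2_norm_eq_inner)
qed

lemma sum_norm_rows_power2:
  fixes V :: "real^'r::finite^'n::finite"
  assumes "transpose V ** V = mat 1"
  shows "(\<Sum>i\<in>UNIV. (norm (V $ i))\<^sup>2) = real CARD('r)"
proof -
  have "(norm x)\<^sup>2 = (\<Sum>b\<in>Basis. (x \<bullet> b)\<^sup>2)" for x :: "real^'r"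
    unfolding power2_norm_eq_inner by (simp only: power2_eq_square euclidean_inner[of x x])
  then have "(\<Sum>i\<in>UNIV. (norm (V $ i))\<^sup>2) = (\<Sum>i\<in>UNIV. \<Sum>b\<in>Basis. (V $ i \<bullet> b)\<^sup>2)"
    by simp
  also have "\<dots> = (\<Sum>b\<in>Basis. \<Sum>i\<in>UNIV. (V $ i \<bullet> b)\<^sup>2)"
    by (rule sum.swap)
  also have "\<dots> = real CARD('r)"
    by (simp add: sum_inner_rows_power2[OF assms])
  finally show ?thesis .
qed

lemma sum_norm_rows_in_span_le_dim:
  fixes V :: "real^'r::finite^'n::finite"
  assumes "transpose V ** V = mat 1"
  shows "(\<Sum>i | V $ i \<in> span W. (norm (V $ i))\<^sup>2) \<le> real (dim W)"
proof -
  obtain B where B: "pairwise orthogonal B" "\<And>b. b \<in> B \<Longrightarrow> norm b = 1"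
      "independent B" "card B = dim W" "span B = span W"
    using orthonormal_basis_subspace[of "span W"] by (metis dim_span subspace_span)
  have "finite B"
    using B(3) by (simp add: independent_imp_finite)
  have "(\<Sum>i | V $ i \<in> span W. (norm (V $ i))\<^sup>2) = (\<Sum>i | V $ i \<in> span W. \<Sum>b\<in>B. (V $ i \<bullet> b)\<^sup>2)"
    using norm_power2_eq_sum_inner_orthonormal[OF B(1,2) _ \<open>finite B\<close>] B(5) by simp
  also have "\<dots> = (\<Sum>b\<in>B. \<Sum>i | V $ i \<in> span W. (V $ i \<bullet> b)\<^sup>2)"
    by (rule sum.swap)
  also have "\<dots> \<le> (\<Sum>b\<in>B. \<Sum>i\<in>UNIV. (V $ i \<bullet> b)\<^sup>2)"
    by (intro sum_mono sum_mono2) auto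
  also have "\<dots> = real (dim W)"
    using B(2,4) by (simp add: sum_inner_rows_power2[OF assms])
  finally show ?thesis .
qed

lemma prob_row_not_in_span_ge:
  fixes V :: "real^'r::finite^'n::finite" and p :: "'n pmf"
  assumes "transpose V ** V = mat 1"
    and row_bound: "\<And>i. (norm (V $ i))\<^sup>2 \<le> B" and pmf_bound: "\<And>i. a \<le> pmf p i"
    and "0 < B" "0 \<le> a"
  shows "a / B * (real CARD('r) - real (dim W)) \<le> measure_pmf.prob p {i. V $ i \<notin> span W}"
proof -
  define Out where "Out = {i. V $ i \<notin> span W}"
  have "(\<Sum>i\<in>UNIV. (norm (V $ i))\<^sup>2)
      = (\<Sum>i | V $ i \<in> span W. (norm (V $ i))\<^sup>2) + (\<Sum>i\<in>Out. (norm (V $ i))\<^sup>2)"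
    unfolding Out_def by (subst sum.union_disjoint[symmetric]) (auto intro: sum.cong)
  then have "real CARD('r) - real (dim W) \<le> (\<Sum>i\<in>Out. (norm (V $ i))\<^sup>2)"
    using sum_norm_rows_power2[OF assms(1)] sum_norm_rows_in_span_le_dim[OF assms(1), of W]
    by linarith
  also have "\<dots> \<le> real (card Out) * B"
    using sum_mono[of Out _ "\<lambda>_. B"] row_bound by simp
  finally have "(real CARD('r) - real (dim W)) / B \<le> real (card Out)"
    using \<open>0 < B\<close> by (simp add: divide_le_eq)
  then have "a / B * (real CARD('r) - real (dim W)) \<le> a * real (card Out)"
    using mult_left_mono[OF _ \<open>0 \<le> a\<close>] by (metis times_divide_eq_left times_divide_eq_right)
  also have "\<dots> \<le> (\<Sum>i\<in>Out. pmf p i)"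
    using sum_mono[of Out "\<lambda>_. a"] pmf_bound by (simp add: mult.commute)
  finally show ?thesis
    by (simp add: Out_def measure_measure_pmf_finite)
qed

lemma rank_mult_thin_svd:
  fixes S :: "real^'d::finite^'n::finite"
  assumes "is_thin_svd (M :: real^'n^'m::finite) U s (V :: real^'r::finite^'n)"
  shows "rank (M ** S) = rank (transpose V ** S)"
proof -
  have UU: "transpose U ** U = mat 1" and s_pos: "\<And>k. s $ k \<noteq> 0"
    and M_eq: "M = U ** diag_vec s ** transpose V"
    using assms unfolding is_thin_svd_def by (auto simp: less_imp_neq[symmetric])
  have "diag_vec (\<chi> k. 1 / s $ k) ** diag_vec s = mat 1"
    using s_pos
    by (auto simp: diag_vec_def matrix_matrix_mult_def mat_def vec_eq_iff if_distrib[of "\<lambda>x. _ * x"]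
        sum.delta' cong: if_cong)
  then have "(diag_vec (\<chi> k. 1 / s $ k) ** transpose U) ** (M ** S) = transpose V ** S"
    by (simp add: M_eq matrix_mul_assoc) (simp add: UU matrix_mul_assoc[symmetric] matrix_mul_lid)
  moreover have "M ** S = (U ** diag_vec s) ** (transpose V ** S)"
    by (simp add: M_eq matrix_mul_assoc)
  ultimately show ?thesis
    using rank_mul_le_right[of "diag_vec (\<chi> k. 1 / s $ k) ** transpose U" "M ** S"]
      rank_mul_le_right[of "U ** diag_vec s" "transpose V ** S"] by simp
qed

lemma rank_sampled_matrix:
  fixes M :: "real^'n::finite^'m::finite" and V :: "real^'r::finite^'n" and f :: "'d::finite \<Rightarrow> 'n"
  assumes svd: "is_thin_svd M U s V"
    and pmf_pos: "\<forall>i. pmf p i > 0"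
    and spanning: "span (range (\<lambda>j. V $ f j)) = UNIV"
  shows "rank (sampled_matrix M p f :: real^'d^'m) = CARD('r)"
proof -
  define c where "c i = sqrt (real CARD('d) * pmf p i)" for i
  have c_pos: "0 < c i" for i
    unfolding c_def using pmf_pos by simp
  define S :: "real^'d^'n" where "S = (\<chi> i j. if f j = i then 1 / c i else 0)"
  have "sampled_matrix M p f = M ** S"
    unfolding sampled_matrix_def S_def c_def
    by (simp add: matrix_matrix_mult_def vec_eq_iff if_distrib[of "\<lambda>x. _ * x"] sum.delta' cong: if_cong)
  moreover have "V $ f j \<in> span (columns (transpose V ** S))" for j
  proof -
    have "column j (transpose V ** S) = (1 / c (f j)) *\<^sub>R V $ f j"
      by (simp add: S_def column_def matrix_matrix_mult_def transpose_def vec_eq_iff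
          if_distrib[of "\<lambda>x. _ * x"] sum.delta' mult.commute cong: if_cong)
    then have "V $ f j = c (f j) *\<^sub>R column j (transpose V ** S)"
      using c_pos[of "f j"] by simp
    moreover have "column j (transpose V ** S) \<in> columns (transpose V ** S)"
      by (auto simp: columns_def)
    ultimately show ?thesis
      by (simp add: span_base span_mul)
  qed
  then have "span (range (\<lambda>j. V $ f j)) \<subseteq> span (columns (transpose V ** S))"
    by (intro span_minimal) auto
  then have "span (columns (transpose V ** S)) = UNIV"
    using spanning by auto
  then have "rank (transpose V ** S) = CARD('r)"
    using dim_eq_full[of "columns (transpose V ** S)"] by (simp add: column_rank_def)
  ultimately show ?thesis
    using rank_mult_thin_svd[OF svd, of S] by simp
qed

lemma prob_sampled_rows_span_ge:
  fixes V :: "real^'r::finite^'n::finite" and p :: "'n pmf"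
  assumes VV: "transpose V ** V = mat 1"
    and row_bound: "\<And>i. (norm (V $ i))\<^sup>2 \<le> B" and pmf_bound: "\<And>i. a \<le> pmf p i"
    and "0 < B" "0 \<le> a"
  shows "1 - real CARD('r) * exp (- (a / B * real CARD('d::finite)))
           \<le> measure_pmf.prob (Pi_pmf (UNIV :: 'd set) dflt (\<lambda>_. p)) {f. span (range (\<lambda>j. V $ f j)) = UNIV}"
proof -
  define q where "q = a / B"
  have escape: "q * (real DIM(real^'r) - real (dim W)) \<le> measure_pmf.prob p {i. V $ i \<notin> span W}" for W
    using prob_row_not_in_span_ge[OF VV row_bound pmf_bound \<open>0 < B\<close> \<open>0 \<le> a\<close>] by (simp add: q_def)
  have "0 \<le> q"
    using \<open>0 < B\<close> \<open>0 \<le> a\<close> by (simp add: q_def)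
  have "q * real CARD('r) \<le> 1"
    using order_trans[OF escape[of "{}"] measure_pmf.prob_le_1] by simp
  then have "q \<le> 1"
    using \<open>0 \<le> q\<close> mult_left_mono[of 1 "real CARD('r)" q] by simp
  have "(1 - q) ^ CARD('d) \<le> exp (- q) ^ CARD('d)"
    using \<open>q \<le> 1\<close> exp_ge_add_one_self[of "- q"] by (intro power_mono) auto
  also have "\<dots> = exp (- (q * real CARD('d)))"
    by (metis exp_of_nat_mult mult.commute mult_minus_right)
  finally have "(1 - q) ^ CARD('d) \<le> exp (- (q * real CARD('d)))" .
  have "measure_pmf.prob (Pi_pmf (UNIV :: 'd set) dflt (\<lambda>_. p)) {f. span (range (\<lambda>j. V $ f j)) \<noteq> UNIV}
      \<le> real CARD('r) * (1 - q) ^ CARD('d)"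
    using prob_Pi_pmf_not_spanning_le[OF escape \<open>q \<le> 1\<close>, where D="UNIV :: 'd set" and W="{}" and dflt=dflt]
    by (simp add: image_image)
  also have "\<dots> \<le> real CARD('r) * exp (- (q * real CARD('d)))"
    using \<open>(1 - q) ^ CARD('d) \<le> exp (- (q * real CARD('d)))\<close> by (intro mult_left_mono) auto
  finally have "measure_pmf.prob (Pi_pmf (UNIV :: 'd set) dflt (\<lambda>_. p)) {f. span (range (\<lambda>j. V $ f j)) \<noteq> UNIV}
      \<le> real CARD('r) * exp (- (q * real CARD('d)))" .
  then show ?thesis
    using measure_pmf.prob_compl[of "{f. span (range (\<lambda>j. V $ f j)) = UNIV}" "Pi_pmf (UNIV :: 'd set) dflt (\<lambda>_. p)"]
    by (simp add: q_def set_diff_eq)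
qed

lemma norm_row_power2_le_incoherence:
  fixes U :: "real^'r::finite^'m::finite" and V :: "real^'r^'n::finite"
  shows "(norm (V $ i))\<^sup>2 \<le> incoherence U V * real CARD('r) / real CARD('n)"
proof -
  have "real CARD('n) / real CARD('r) * (norm (V $ i))\<^sup>2 \<le> incoherence U V"
    unfolding incoherence_def by (rule max.coboundedI2, rule Max_ge) auto
  then show ?thesis
    by (simp add: field_simps)
qed

lemma incoherence_ge_1:
  fixes U :: "real^'r::finite^'m::finite" and V :: "real^'r^'n::finite"
  assumes "transpose V ** V = mat 1"
  shows "1 \<le> incoherence U V"
proof -
  have "(\<Sum>i\<in>UNIV. (norm (V $ i))\<^sup>2)
      \<le> (\<Sum>i\<in>(UNIV :: 'n set). incoherence U V * real CARD('r) / real CARD('n))"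
    by (intro sum_mono norm_row_power2_le_incoherence)
  then show ?thesis
    by (simp add: sum_norm_rows_power2[OF assms])
qed

lemma mult_exp_neg_le:
  fixes r t x :: real
  assumes "0 < r" "t + ln r \<le> x"
  shows "r * exp (- x) \<le> exp (- t)"
proof -
  have "r * exp (- x) = exp (ln r - x)"
    using \<open>0 < r\<close> by (simp add: exp_diff exp_minus field_simps)
  also have "\<dots> \<le> exp (- t)"
    using assms(2) by simp
  finally show ?thesis .
qed

theorem lemma1:
  fixes M :: "real^'n::finite^'m::finite"
    and U :: "real^'r::finite^'m" and s :: "real^'r" and V :: "real^'r^'n"
    and p :: "'n pmf" and t :: real
  assumes rank: "rank M = CARD('r)"
    and svd: "is_thin_svd M U s V"
    and ppos: "\<forall>i. pmf p i > 0"
    and tpos: "t > 0"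
    and dbound: "real CARD('d::finite) \<ge>
       7 * incoherence U V * real CARD('r) * (t + ln (real CARD('r)))
         / (real CARD('n) * Min (pmf p ` UNIV))"
  shows "measure_pmf.prob (Pi_pmf (UNIV :: 'd set) undefined (\<lambda>_. p))
           {f. rank (sampled_matrix M p f :: real^'d^'m) = CARD('r)} \<ge> 1 - exp (- t)"
proof -
  have VV: "transpose V ** V = mat 1"
    using svd unfolding is_thin_svd_def by simp
  define a where "a = Min (pmf p ` UNIV)"
  define B where "B = incoherence U V * real CARD('r) / real CARD('n)"
  have "0 < a"
    unfolding a_def using ppos by (subst Min_gr_iff) auto
  have pmf_bound: "a \<le> pmf p i" for i
    unfolding a_def by (rule Min_le) auto
  have "1 \<le> incoherence U V"
    using incoherence_ge_1[OF VV] .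
  then have "0 < B"
    by (simp add: B_def)
  have "7 * (t + ln (real CARD('r)))
      = a / B * (7 * incoherence U V * real CARD('r) * (t + ln (real CARD('r))) / (real CARD('n) * a))"
    using \<open>0 < a\<close> \<open>1 \<le> incoherence U V\<close> by (simp add: B_def field_simps)
  also have "\<dots> \<le> a / B * real CARD('d)"
    using dbound \<open>0 < a\<close> \<open>0 < B\<close> unfolding a_def[symmetric] by (intro mult_left_mono) auto
  finally have "7 * (t + ln (real CARD('r))) \<le> a / B * real CARD('d)" .
  moreover have "t + ln (real CARD('r)) \<le> 7 * (t + ln (real CARD('r)))"
    using tpos by simp
  ultimately have "real CARD('r) * exp (- (a / B * real CARD('d))) \<le> exp (- t)"
    by (intro mult_exp_neg_le) auto
  moreover have "1 - real CARD('r) * exp (- (a / B * real CARD('d)))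
      \<le> measure_pmf.prob (Pi_pmf (UNIV :: 'd set) undefined (\<lambda>_. p)) {f. span (range (\<lambda>j. V $ f j)) = UNIV}"
    using norm_row_power2_le_incoherence[of V] \<open>0 < a\<close>
    by (intro prob_sampled_rows_span_ge[OF VV _ pmf_bound \<open>0 < B\<close>]) (simp_all add: B_def)
  moreover have "\<dots> \<le> measure_pmf.prob (Pi_pmf (UNIV :: 'd set) undefined (\<lambda>_. p))
                        {f. rank (sampled_matrix M p f :: real^'d^'m) = CARD('r)}"
    using rank_sampled_matrix[OF svd ppos] by (intro measure_pmf.finite_measure_mono) auto
  ultimately show ?thesis
    by linarith
qed

end
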